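(* Let $H\ge1$, $c_a\ge0$, $c_R>0$, $\beta=c_a/c_R$. Consider two patients $j\in\{u,l\}$ with readmission probabilities $p^j_{h,0},p^j_{h,1}\in[0,1)$, $p^j_{h,0}\ge p^j_{h,1}$, $h=1,\dots,H$, and treatment effects $\Delta^j_h=p^j_{h,0}-p^j_{h,1}$. For each patient define $V^j_{H+1}=0$, $V^j_h=\min\{c_a+p^j_{h,1}c_R+(1-p^j_{h,1})V^j_{h+1},\ p^j_{h,0}c_R+(1-p^j_{h,0})V^j_{h+1}\}$, and the optimal action $a^{*,j}_h=1$ if $\Delta^j_h>\beta/(1-V^j_{h+1}/c_R)$ and $a^{*,j}_h=0$ otherwise. Suppose that for all $1\le h\le H$, $$\Delta^l_h-\Delta^u_h<\frac{\beta}{\prod_{i=h+1}^H(1-p^l_{i,1})}-\frac{\beta}{\prod_{i=h+1}^H(1-p^u_{i,0})}.$$ Then for every $1\le h\le H$, $a^{*,l}_h=1$ implies $a^{*,u}_h=1$.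
   Context: Empty products equal $1$. The action rule $a^{*,j}_h=1$ iff $\Delta^j_h>\beta/(1-V^j_{h+1}/c_R)$ is the optimal (cost-minimizing, ties broken toward no intervention) decision in the post-discharge MDP with intervention cost $c_a$ and readmission cost $c_R$. *)

theory Defs
  imports "HOL-Analysis.Analysis"
begin

text \<open>Value function of the post-discharge MDP. Vrem H ca cR p0 p1 n is the value
  V_{H+1-n}, i.e. with n periods remaining; Vrem ... 0 = V_{H+1} = 0.\<close>
fun Vrem :: "nat \<Rightarrow> real \<Rightarrow> real \<Rightarrow> (nat \<Rightarrow> real) \<Rightarrow> (nat \<Rightarrow> real) \<Rightarrow> nat \<Rightarrow> real" where
  "Vrem H ca cR p0 p1 0 = 0"
| "Vrem H ca cR p0 p1 (Suc n) =
     (let h = H - n; V' = Vrem H ca cR p0 p1 n in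
      min (ca + p1 h * cR + (1 - p1 h) * V') (p0 h * cR + (1 - p0 h) * V'))"

text \<open>V_h for 1 \<le> h \<le> H+1 (p0 h, p1 h = readmission probs without / with intervention).\<close>
definition Vval :: "nat \<Rightarrow> real \<Rightarrow> real \<Rightarrow> (nat \<Rightarrow> real) \<Rightarrow> (nat \<Rightarrow> real) \<Rightarrow> nat \<Rightarrow> real" where
  "Vval H ca cR p0 p1 h = Vrem H ca cR p0 p1 (H + 1 - h)"

definition opt_action :: "nat \<Rightarrow> real \<Rightarrow> real \<Rightarrow> (nat \<Rightarrow> real) \<Rightarrow> (nat \<Rightarrow> real) \<Rightarrow> nat \<Rightarrow> bool" where
  "opt_action H ca cR p0 p1 h \<longleftrightarrow>
     p0 h - p1 h > (ca / cR) / (1 - Vval H ca cR p0 p1 (h + 1) / cR)"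

end

theory Submission
  imports Defs
begin

text \<open>For the normalised value W h = 1 - V h / cR the Bellman recursion reads
  W h = max ((1 - p1 h) * W (h+1) - \<beta>) ((1 - p0 h) * W (h+1)). By backward induction W h lies
  between the product of the 1 - p0 i (never intervene) and the product of the 1 - p1 i
  (intervene at no cost) over i = h..H. Hence the threshold \<beta> / W (h+1) of the optimal rule lies
  between \<beta> / \<Prod>(1 - p1 i) and \<beta> / \<Prod>(1 - p0 i): intervening for patient l forces its
  treatment effect above the former bound, and the hypothesis then pushes the effect for patient u
  above the latter, which forces intervention for u.\<close>

lemma one_minus_Vrem_Suc_div:
  assumes "cR > 0"
  shows "1 - Vrem H ca cR p0 p1 (Suc n) / cR =
           max ((1 - p1 (H - n)) * (1 - Vrem H ca cR p0 p1 n / cR) - ca / cR)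
               ((1 - p0 (H - n)) * (1 - Vrem H ca cR p0 p1 n / cR))"
proof -
  let ?h = "H - n" and ?V = "Vrem H ca cR p0 p1 n"
  define A where "A = ca + p1 ?h * cR + (1 - p1 ?h) * ?V"
  define B where "B = p0 ?h * cR + (1 - p0 ?h) * ?V"
  have "Vrem H ca cR p0 p1 (Suc n) = min A B"
    by (simp add: Let_def A_def B_def)
  moreover have "1 - min A B / cR = max (1 - A / cR) (1 - B / cR)"
    using assms by (auto simp: min_def max_def divide_right_mono divide_le_cancel)
  moreover have "1 - A / cR = (1 - p1 ?h) * (1 - ?V / cR) - ca / cR"
    using assms unfolding A_def by (simp add: field_simps)
  moreover have "1 - B / cR = (1 - p0 ?h) * (1 - ?V / cR)"
    using assms unfolding B_def by (simp add: field_simps)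
  ultimately show ?thesis by simp
qed

lemma prod_remaining_insert:
  fixes f :: "nat \<Rightarrow> 'a::comm_monoid_mult"
  assumes "n < H"
  shows "(\<Prod>i\<in>{H - Suc n + 1..H}. f i) = f (H - n) * (\<Prod>i\<in>{H - n + 1..H}. f i)"
proof -
  have "{H - Suc n + 1..H} = insert (H - n) {H - n + 1..H}"
    using assms by auto
  then show ?thesis by simp
qed

lemma Vrem_lower_bound:
  assumes "cR > 0" and "n \<le> H" and "\<forall>i\<in>{H - n + 1..H}. p0 i \<le> 1"
  shows "(\<Prod>i\<in>{H - n + 1..H}. 1 - p0 i) \<le> 1 - Vrem H ca cR p0 p1 n / cR"
  using assms(2,3)
proof (induction n)
  case 0
  then show ?case by simp
next
  case (Suc n)
  let ?W = "1 - Vrem H ca cR p0 p1 n / cR"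
  have tail: "\<forall>i\<in>{H - n + 1..H}. p0 i \<le> 1"
    using Suc.prems by auto
  have "(\<Prod>i\<in>{H - Suc n + 1..H}. 1 - p0 i) = (1 - p0 (H - n)) * (\<Prod>i\<in>{H - n + 1..H}. 1 - p0 i)"
    using Suc.prems by (intro prod_remaining_insert) simp
  also have "\<dots> \<le> (1 - p0 (H - n)) * ?W"
    using Suc tail by (intro mult_left_mono) auto
  also have "\<dots> \<le> 1 - Vrem H ca cR p0 p1 (Suc n) / cR"
    using assms(1) by (simp only: one_minus_Vrem_Suc_div)
  finally show ?case .
qed

lemma Vrem_upper_bound:
  assumes "ca \<ge> 0" and "cR > 0" and "n \<le> H"
    and "\<forall>i\<in>{H - n + 1..H}. p1 i \<le> p0 i \<and> p0 i \<le> 1"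
  shows "1 - Vrem H ca cR p0 p1 n / cR \<le> (\<Prod>i\<in>{H - n + 1..H}. 1 - p1 i)"
  using assms(3,4)
proof (induction n)
  case 0
  then show ?case by simp
next
  case (Suc n)
  let ?h = "H - n" and ?W = "1 - Vrem H ca cR p0 p1 n / cR"
  have tail: "\<forall>i\<in>{H - n + 1..H}. p1 i \<le> p0 i \<and> p0 i \<le> 1"
    using Suc.prems by auto
  have head: "p1 ?h \<le> p0 ?h \<and> p0 ?h \<le> 1"
    using Suc.prems by auto
  have "0 \<le> (\<Prod>i\<in>{H - n + 1..H}. 1 - p0 i)"
    using tail by (intro prod_nonneg) auto
  also have "\<dots> \<le> ?W"
    using tail Suc.prems assms(2) by (intro Vrem_lower_bound) auto
  finally have "(1 - p0 ?h) * ?W \<le> (1 - p1 ?h) * ?W"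
    using head by (intro mult_right_mono) auto
  moreover have "ca / cR \<ge> 0"
    using assms(1,2) by simp
  ultimately have "1 - Vrem H ca cR p0 p1 (Suc n) / cR \<le> (1 - p1 ?h) * ?W"
    using assms(2) by (simp only: one_minus_Vrem_Suc_div)
  also have "\<dots> \<le> (1 - p1 ?h) * (\<Prod>i\<in>{H - n + 1..H}. 1 - p1 i)"
    using Suc.IH Suc.prems(1) tail head by (intro mult_left_mono) auto
  also have "\<dots> = (\<Prod>i\<in>{H - Suc n + 1..H}. 1 - p1 i)"
    using Suc.prems by (simp only: prod_remaining_insert)
  finally show ?case .
qed

lemma Vval_eq_Vrem:
  assumes "1 \<le> h" and "h \<le> H + 1"
  shows "Vval H ca cR p0 p1 h = Vrem H ca cR p0 p1 (H + 1 - h)"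
    and "H - (H + 1 - h) + 1 = h"
  using assms by (simp_all add: Vval_def)

lemma Vval_lower_bound:
  assumes "cR > 0" and "1 \<le> h" and "h \<le> H + 1" and "\<forall>i\<in>{h..H}. p0 i \<le> 1"
  shows "(\<Prod>i\<in>{h..H}. 1 - p0 i) \<le> 1 - Vval H ca cR p0 p1 h / cR"
  using Vrem_lower_bound[OF assms(1), of "H + 1 - h" H p0 ca p1] assms
  by (simp add: Vval_eq_Vrem)

lemma Vval_upper_bound:
  assumes "ca \<ge> 0" and "cR > 0" and "1 \<le> h" and "h \<le> H + 1"
    and "\<forall>i\<in>{h..H}. p1 i \<le> p0 i \<and> p0 i \<le> 1"
  shows "1 - Vval H ca cR p0 p1 h / cR \<le> (\<Prod>i\<in>{h..H}. 1 - p1 i)"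
  using Vrem_upper_bound[OF assms(1,2), of "H + 1 - h" H p1 p0] assms
  by (simp add: Vval_eq_Vrem)

lemma opt_action_imp_gain_gt:
  assumes "ca \<ge> 0" and "cR > 0" and "h \<le> H"
    and "\<forall>i\<in>{h+1..H}. p1 i \<le> p0 i \<and> p0 i < 1"
    and "opt_action H ca cR p0 p1 h"
  shows "p0 h - p1 h > (ca / cR) / (\<Prod>i\<in>{h+1..H}. 1 - p1 i)"
proof -
  let ?W = "1 - Vval H ca cR p0 p1 (h + 1) / cR"
  have "0 < (\<Prod>i\<in>{h+1..H}. 1 - p0 i)"
    using assms(4) by (intro prod_pos) auto
  also have "\<dots> \<le> ?W"
    using assms by (intro Vval_lower_bound) auto
  finally have "(ca / cR) / (\<Prod>i\<in>{h+1..H}. 1 - p1 i) \<le> (ca / cR) / ?W"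
    using assms by (intro frac_le Vval_upper_bound) auto
  also have "\<dots> < p0 h - p1 h"
    using assms(5) by (simp add: opt_action_def)
  finally show ?thesis .
qed

lemma opt_action_if_gain_gt:
  assumes "ca \<ge> 0" and "cR > 0" and "h \<le> H"
    and "\<forall>i\<in>{h+1..H}. p0 i < 1"
    and "p0 h - p1 h > (ca / cR) / (\<Prod>i\<in>{h+1..H}. 1 - p0 i)"
  shows "opt_action H ca cR p0 p1 h"
proof -
  let ?P = "\<Prod>i\<in>{h+1..H}. 1 - p0 i"
  have "0 < ?P"
    using assms(4) by (intro prod_pos) auto
  moreover have "?P \<le> 1 - Vval H ca cR p0 p1 (h + 1) / cR"
    using assms by (intro Vval_lower_bound) auto
  ultimately have "(ca / cR) / (1 - Vval H ca cR p0 p1 (h + 1) / cR) \<le> (ca / cR) / ?P"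
    using assms(1,2) by (intro frac_le) auto
  with assms(5) show ?thesis
    by (simp add: opt_action_def)
qed

theorem mainTheorem5:
  fixes H :: nat and ca cR :: real
    and p0u p1u p0l p1l :: "nat \<Rightarrow> real"
  assumes "H \<ge> 1" and "ca \<ge> 0" and "cR > 0"
    and "\<And>h. 1 \<le> h \<Longrightarrow> h \<le> H \<Longrightarrow> 0 \<le> p0u h \<and> p0u h < 1 \<and> 0 \<le> p1u h \<and> p1u h < 1 \<and> p0u h \<ge> p1u h"
    and "\<And>h. 1 \<le> h \<Longrightarrow> h \<le> H \<Longrightarrow> 0 \<le> p0l h \<and> p0l h < 1 \<and> 0 \<le> p1l h \<and> p1l h < 1 \<and> p0l h \<ge> p1l h"
    and "\<And>h. 1 \<le> h \<Longrightarrow> h \<le> H \<Longrightarrow>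
           (p0l h - p1l h) - (p0u h - p1u h)
             < (ca / cR) / (\<Prod>i\<in>{h+1..H}. (1 - p1l i)) - (ca / cR) / (\<Prod>i\<in>{h+1..H}. (1 - p0u i))"
  shows "\<forall>h. 1 \<le> h \<and> h \<le> H \<longrightarrow>
           opt_action H ca cR p0l p1l h \<longrightarrow> opt_action H ca cR p0u p1u h"
proof (intro allI impI)
  fix h
  assume h: "1 \<le> h \<and> h \<le> H" and l_intervenes: "opt_action H ca cR p0l p1l h"
  have "p0l h - p1l h > (ca / cR) / (\<Prod>i\<in>{h+1..H}. 1 - p1l i)"
    using assms(2,3,5) h l_intervenes by (intro opt_action_imp_gain_gt) auto
  with assms(6) h have "p0u h - p1u h > (ca / cR) / (\<Prod>i\<in>{h+1..H}. 1 - p0u i)"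
    by fastforce
  then show "opt_action H ca cR p0u p1u h"
    using assms(2,3,4) h by (intro opt_action_if_gain_gt) auto
qed

end
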